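(* Let $(Y,\preceq,\prec,\to)$ be a solid vector space, let $b\in Y$ with $b\succ0$, and let $\|\cdot\|$ be the Minkowski functional of $[-b,b]$. Then: (i) the monotone norm $\|\cdot\|$ generates the order topology on $Y$; (ii) for a sequence $(x_n)$ in $Y$, $x_n\to x$ implies $\|x_n-x\|\to0$.
   Context: Vector space with convergence: a real vector space $Y$ with a relation $\to$ between sequences in $Y$ and points of $Y$ (uniqueness of limits not assumed) such that (C1) $x_n\to x$, $y_n\to y$ imply $x_n+y_n\to x+y$; (C2) $x_n\to x$, $\lambda\in\mathbb R$ imply $\lambda x_n\to\lambda x$; (C3) $\lambda_n\to\lambda$ in $\mathbb R$ imply $\lambda_n x\to\lambda x$. $A\subseteq Y$ is open if $x_n\to x\in A$ implies $x_n\in A$ for all but finitely many $n$; closed if $x_n\to x$, $x_n\in A$ $\forall n$ imply $x\in A$; $A^\circ$ is the union of all open subsets of $A$. A cone is a nonempty closed $K$ with $\lambda K\subseteq K$ ($\lambda\ge0$), $K+K\subseteq K$, $K\cap(-K)=\{0\}$; solid if $K\ne\{0\}$, $K^\circ\ne\emptyset$. A vector ordering is a partial order $\preceq$ with (V1) $x\preceq y\Rightarrow x+z\preceq y+z$; (V2) $\lambda\ge0$, $x\preceq y\Rightarrow\lambda x\preceq\lambda y$; (V3) $x_n\to x$, $y_n\to y$, $x_n\preceq y_n$ $\forall n\Rightarrow x\preceq y$. Solid vector space: positive cone $K=\{x:x\succeq0\}$ solid, with $x\prec y$ iff $y-x\in K^\circ$. $[a,b]=\{x:a\preceq x\preceq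 b\}$; Minkowski functional of $A$: $\|x\|=\inf\{\lambda\ge0:x\in\lambda A\}$ (it is a norm for $A=[-b,b]$, $b\succ0$). Monotone norm: $\|x\|\le\|y\|$ whenever $0\preceq x\preceq y$. Order topology: the topology on $Y$ with basis the open intervals $(a,b)=\{x:a\prec x\prec b\}$, $a\prec b$. *)

theory Defs
  imports "HOL-Analysis.Analysis"
begin

definition conv_space :: "((nat \<Rightarrow> 'a::real_vector) \<Rightarrow> 'a \<Rightarrow> bool) \<Rightarrow> bool" where
  "conv_space conv \<longleftrightarrow>
     (\<forall>x y x0 y0. conv x x0 \<longrightarrow> conv y y0 \<longrightarrow> conv (\<lambda>n. x n + y n) (x0 + y0)) \<and>
     (\<forall>x x0 (c::real). conv x x0 \<longrightarrow> conv (\<lambda>n. c *\<^sub>R x n) (c *\<^sub>R x0)) \<and>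
     (\<forall>(l::nat \<Rightarrow> real) l0 x. l \<longlonglongrightarrow> l0 \<longrightarrow> conv (\<lambda>n. l n *\<^sub>R x) (l0 *\<^sub>R x))"

definition seq_open :: "((nat \<Rightarrow> 'a) \<Rightarrow> 'a \<Rightarrow> bool) \<Rightarrow> 'a set \<Rightarrow> bool" where
  "seq_open conv A \<longleftrightarrow> (\<forall>x x0. conv x x0 \<longrightarrow> x0 \<in> A \<longrightarrow> (\<forall>\<^sub>F n in sequentially. x n \<in> A))"

definition seq_closed :: "((nat \<Rightarrow> 'a) \<Rightarrow> 'a \<Rightarrow> bool) \<Rightarrow> 'a set \<Rightarrow> bool" where
  "seq_closed conv A \<longleftrightarrow> (\<forall>x x0. conv x x0 \<longrightarrow> (\<forall>n. x n \<in> A) \<longrightarrow> x0 \<in> A)"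

definition seq_interior :: "((nat \<Rightarrow> 'a) \<Rightarrow> 'a \<Rightarrow> bool) \<Rightarrow> 'a set \<Rightarrow> 'a set" where
  "seq_interior conv A = \<Union>{U. U \<subseteq> A \<and> seq_open conv U}"

definition conv_cone :: "((nat \<Rightarrow> 'a::real_vector) \<Rightarrow> 'a \<Rightarrow> bool) \<Rightarrow> 'a set \<Rightarrow> bool" where
  "conv_cone conv K \<longleftrightarrow> K \<noteq> {} \<and> seq_closed conv K \<and>
     (\<forall>c x. c \<ge> (0::real) \<longrightarrow> x \<in> K \<longrightarrow> c *\<^sub>R x \<in> K) \<and>
     (\<forall>x y. x \<in> K \<longrightarrow> y \<in> K \<longrightarrow> x + y \<in> K) \<and>
     K \<inter> uminus ` K = {0}"

definition solid_cone :: "((nat \<Rightarrow> 'a::real_vector) \<Rightarrow> 'a \<Rightarrow> bool) \<Rightarrow> 'a set \<Rightarrow> bool" where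
  "solid_cone conv K \<longleftrightarrow> conv_cone conv K \<and> K \<noteq> {0} \<and> seq_interior conv K \<noteq> {}"

definition vector_ordering :: "((nat \<Rightarrow> 'a::real_vector) \<Rightarrow> 'a \<Rightarrow> bool) \<Rightarrow> ('a \<Rightarrow> 'a \<Rightarrow> bool) \<Rightarrow> bool" where
  "vector_ordering conv le \<longleftrightarrow>
     (\<forall>x. le x x) \<and> (\<forall>x y. le x y \<longrightarrow> le y x \<longrightarrow> x = y) \<and>
     (\<forall>x y z. le x y \<longrightarrow> le y z \<longrightarrow> le x z) \<and>
     (\<forall>x y z. le x y \<longrightarrow> le (x + z) (y + z)) \<and>
     (\<forall>c x y. c \<ge> (0::real) \<longrightarrow> le x y \<longrightarrow> le (c *\<^sub>R x) (c *\<^sub>R y)) \<and>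
     (\<forall>x y x0 y0. conv x x0 \<longrightarrow> conv y y0 \<longrightarrow> (\<forall>n. le (x n) (y n)) \<longrightarrow> le x0 y0)"

definition pos_cone :: "('a::real_vector \<Rightarrow> 'a \<Rightarrow> bool) \<Rightarrow> 'a set" where
  "pos_cone le = {x. le 0 x}"

definition solid_vector_space :: "((nat \<Rightarrow> 'a::real_vector) \<Rightarrow> 'a \<Rightarrow> bool) \<Rightarrow> ('a \<Rightarrow> 'a \<Rightarrow> bool) \<Rightarrow> bool" where
  "solid_vector_space conv le \<longleftrightarrow> conv_space conv \<and> vector_ordering conv le \<and>
     solid_cone conv (pos_cone le)"

definition sless :: "((nat \<Rightarrow> 'a::real_vector) \<Rightarrow> 'a \<Rightarrow> bool) \<Rightarrow> ('a \<Rightarrow> 'a \<Rightarrow> bool) \<Rightarrow> 'a \<Rightarrow> 'a \<Rightarrow> bool" where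
  "sless conv le x y \<longleftrightarrow> y - x \<in> seq_interior conv (pos_cone le)"

definition ord_interval :: "('a \<Rightarrow> 'a \<Rightarrow> bool) \<Rightarrow> 'a \<Rightarrow> 'a \<Rightarrow> 'a set" where
  "ord_interval le a b = {x. le a x \<and> le x b}"

definition minkowski :: "'a::real_vector set \<Rightarrow> 'a \<Rightarrow> real" where
  "minkowski A x = Inf {c. c \<ge> 0 \<and> x \<in> (\<lambda>a. c *\<^sub>R a) ` A}"

definition order_topology :: "((nat \<Rightarrow> 'a::real_vector) \<Rightarrow> 'a \<Rightarrow> bool) \<Rightarrow> ('a \<Rightarrow> 'a \<Rightarrow> bool) \<Rightarrow> 'a topology" where
  "order_topology conv le = topology_generated_by
     {{x. sless conv le a x \<and> sless conv le x b} | a b. sless conv le a b}"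

definition norm_open :: "('a::real_vector \<Rightarrow> real) \<Rightarrow> 'a set \<Rightarrow> bool" where
  "norm_open p U \<longleftrightarrow> (\<forall>x\<in>U. \<exists>r>0. \<forall>y. p (y - x) < r \<longrightarrow> y \<in> U)"

end

theory Submission
  imports Defs
begin

text \<open>Write \<open>I\<close> for the interior of the positive cone and \<open>\<parallel>\<cdot>\<parallel>\<close> for the Minkowski
  functional of \<open>[-b, b]\<close>. The interior is stable under adding positive vectors and under
  positive scaling, and it is absorbing along the convergent sequences \<open>x + v/n \<rightarrow> x\<close>.
  Consequently \<open>z \<in> c[-b, b]\<close> as soon as \<open>cb \<plusminus> z \<in> I\<close>, and conversely \<open>\<parallel>z\<parallel> < d\<close> gives
  \<open>-cb \<preceq> z \<preceq> cb\<close> with \<open>c < d\<close>. Hence every order interval \<open>(a, c)\<close> around \<open>x\<close> contains a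
  norm ball (shrink \<open>x - a\<close> and \<open>c - x\<close> by a multiple of \<open>b\<close> while staying in \<open>I\<close>), and every
  norm ball around \<open>x\<close> contains \<open>(x - eb, x + eb)\<close>. If \<open>x\<^sub>n \<rightarrow> x\<close> then \<open>eb \<plusminus> (x\<^sub>n - x) \<rightarrow> eb \<in> I\<close>,
  so eventually \<open>\<parallel>x\<^sub>n - x\<parallel> \<le> e\<close>.\<close>

lemma seq_interior_subset: "seq_interior conv A \<subseteq> A"
  unfolding seq_interior_def by auto

lemma seq_interior_maximal: "U \<subseteq> A \<Longrightarrow> seq_open conv U \<Longrightarrow> U \<subseteq> seq_interior conv A"
  unfolding seq_interior_def by auto

lemma seq_open_seq_interior: "seq_open conv (seq_interior conv A)"
  unfolding seq_open_def
proof (intro allI impI)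
  fix x x0 assume "conv x x0" "x0 \<in> seq_interior conv A"
  then obtain U where U: "U \<subseteq> A" "seq_open conv U" "x0 \<in> U"
    unfolding seq_interior_def by auto
  with \<open>conv x x0\<close> have "\<forall>\<^sub>F n in sequentially. x n \<in> U"
    unfolding seq_open_def by blast
  then show "\<forall>\<^sub>F n in sequentially. x n \<in> seq_interior conv A"
    by (rule eventually_mono) (use U seq_interior_maximal in blast)
qed

lemma seq_open_vimage:
  assumes "\<And>x x0. conv x x0 \<Longrightarrow> conv (\<lambda>n. f (x n)) (f x0)" and "seq_open conv U"
  shows "seq_open conv (f -` U)"
  using assms unfolding seq_open_def by fastforce

lemma norm_open_generate_topology_on:
  assumes "generate_topology_on B U" and "\<And>s. s \<in> B \<Longrightarrow> norm_open p s"
  shows "norm_open p U"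
  using assms(1)
proof (induction rule: generate_topology_on.induct)
  case Empty
  show ?case unfolding norm_open_def by simp
next
  case (Int U1 U2)
  show ?case unfolding norm_open_def
  proof
    fix x assume "x \<in> U1 \<inter> U2"
    then obtain r1 r2 where "r1 > 0" "\<forall>y. p (y - x) < r1 \<longrightarrow> y \<in> U1"
      and "r2 > 0" "\<forall>y. p (y - x) < r2 \<longrightarrow> y \<in> U2"
      using Int.IH unfolding norm_open_def by blast
    then show "\<exists>r>0. \<forall>y. p (y - x) < r \<longrightarrow> y \<in> U1 \<inter> U2"
      by (intro exI[of _ "min r1 r2"]) auto
  qed
next
  case (UN K)
  then show ?case unfolding norm_open_def by blast
next
  case (Basis s)
  then show ?case using assms(2) by blast
qed

lemma minkowski_nonneg:
  assumes "c \<ge> 0" "z \<in> (\<lambda>a. c *\<^sub>R a) ` A"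
  shows "minkowski A z \<ge> 0"
  unfolding minkowski_def using assms by (intro cInf_greatest) auto

lemma minkowski_le:
  assumes "c \<ge> 0" "z \<in> (\<lambda>a. c *\<^sub>R a) ` A"
  shows "minkowski A z \<le> c"
  unfolding minkowski_def using assms by (intro cInf_lower bdd_belowI[of _ 0]) auto

lemma minkowski_lessE:
  assumes "minkowski A z < d" "c \<ge> 0" "z \<in> (\<lambda>a. c *\<^sub>R a) ` A"
  obtains c' where "c' \<ge> 0" "c' < d" "z \<in> (\<lambda>a. c' *\<^sub>R a) ` A"
proof -
  have "{c. c \<ge> 0 \<and> z \<in> (\<lambda>a. c *\<^sub>R a) ` A} \<noteq> {}"
    using assms(2,3) by blast
  from cInf_lessD[OF this] assms(1) that show thesis
    unfolding minkowski_def by blast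
qed

locale ordered_conv_space =
  fixes conv :: "(nat \<Rightarrow> 'a::real_vector) \<Rightarrow> 'a \<Rightarrow> bool" and le :: "'a \<Rightarrow> 'a \<Rightarrow> bool"
  assumes conv_space: "conv_space conv" and vector_ordering: "vector_ordering conv le"
begin

abbreviation pos_interior :: "'a set" where
  "pos_interior \<equiv> seq_interior conv (pos_cone le)"

lemma conv_add: "conv x x0 \<Longrightarrow> conv y y0 \<Longrightarrow> conv (\<lambda>n. x n + y n) (x0 + y0)"
  using conv_space unfolding conv_space_def by blast

lemma conv_scaleR: "conv x x0 \<Longrightarrow> conv (\<lambda>n. c *\<^sub>R x n) (c *\<^sub>R x0)"
  using conv_space unfolding conv_space_def by blast

lemma conv_scaleR_left: "l \<longlonglongrightarrow> l0 \<Longrightarrow> conv (\<lambda>n. l n *\<^sub>R x) (l0 *\<^sub>R x)"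
  using conv_space unfolding conv_space_def by blast

lemma conv_const: "conv (\<lambda>n. x) x"
  using conv_scaleR_left[of "\<lambda>n. 1" 1] by simp

lemma conv_affine: "conv x x0 \<Longrightarrow> conv (\<lambda>n. u + c *\<^sub>R x n) (u + c *\<^sub>R x0)"
  by (intro conv_add conv_const conv_scaleR)

lemma conv_add_inverse_Suc: "conv (\<lambda>n. x + (1 / Suc n) *\<^sub>R v) x"
proof -
  have "(\<lambda>n. 1 / real (Suc n)) \<longlonglongrightarrow> 0"
    using LIMSEQ_Suc[OF lim_const_over_n[of 1]] by simp
  from conv_add[OF conv_const conv_scaleR_left[OF this]] show ?thesis by simp
qed

lemma le_trans: "le x y \<Longrightarrow> le y z \<Longrightarrow> le x z"
  using vector_ordering unfolding vector_ordering_def by blast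

lemma le_add_right: "le x y \<Longrightarrow> le (x + z) (y + z)"
  using vector_ordering unfolding vector_ordering_def by blast

lemma le_scaleR: "c \<ge> 0 \<Longrightarrow> le x y \<Longrightarrow> le (c *\<^sub>R x) (c *\<^sub>R y)"
  using vector_ordering unfolding vector_ordering_def by blast

lemma le_iff_diff_nonneg: "le x y \<longleftrightarrow> le 0 (y - x)"
  using le_add_right[of x y "- x"] le_add_right[of 0 "y - x" x] by auto

lemma nonneg_add: "le 0 u \<Longrightarrow> le 0 v \<Longrightarrow> le 0 (u + v)"
  using le_add_right[of 0 u v] le_trans by auto

lemma nonneg_scaleR: "c \<ge> 0 \<Longrightarrow> le 0 u \<Longrightarrow> le 0 (c *\<^sub>R u)"
  using le_scaleR[of c 0 u] by simp

lemma pos_interior_nonneg: "x \<in> pos_interior \<Longrightarrow> le 0 x"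
  using seq_interior_subset[of conv "pos_cone le"] unfolding pos_cone_def by auto

lemma pos_interior_add_nonneg:
  assumes "x \<in> pos_interior" "le 0 k"
  shows "x + k \<in> pos_interior"
proof -
  let ?V = "(\<lambda>y. y - k) -` pos_interior"
  have "?V \<subseteq> pos_cone le"
  proof
    fix y assume "y \<in> ?V"
    then have "le 0 (y - k)" by (simp add: pos_interior_nonneg)
    from nonneg_add[OF this assms(2)] show "y \<in> pos_cone le" unfolding pos_cone_def by simp
  qed
  moreover have "seq_open conv ?V"
  proof (rule seq_open_vimage[OF _ seq_open_seq_interior])
    fix y y0 assume "conv y y0"
    from conv_affine[OF this, of "- k" 1] show "conv (\<lambda>n. y n - k) (y0 - k)" by simp
  qed
  ultimately have "?V \<subseteq> pos_interior"
    by (rule seq_interior_maximal)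
  then show ?thesis using assms(1) by auto
qed

lemma pos_interior_scaleR:
  assumes "x \<in> pos_interior" "c > 0"
  shows "c *\<^sub>R x \<in> pos_interior"
proof -
  let ?V = "(\<lambda>y. inverse c *\<^sub>R y) -` pos_interior"
  have "?V \<subseteq> pos_cone le"
  proof
    fix y assume "y \<in> ?V"
    then have "le 0 (inverse c *\<^sub>R y)"
      by (intro pos_interior_nonneg) simp
    from nonneg_scaleR[OF _ this, of c] assms(2) show "y \<in> pos_cone le"
      unfolding pos_cone_def by simp
  qed
  moreover have "seq_open conv ?V"
  proof (rule seq_open_vimage[OF _ seq_open_seq_interior])
    fix y y0 assume "conv y y0"
    from conv_affine[OF this, of 0] show "conv (\<lambda>n. inverse c *\<^sub>R y n) (inverse c *\<^sub>R y0)"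
      by simp
  qed
  ultimately have "?V \<subseteq> pos_interior"
    by (rule seq_interior_maximal)
  then show ?thesis using assms by auto
qed

lemma pos_interior_eventually:
  "conv x x0 \<Longrightarrow> x0 \<in> pos_interior \<Longrightarrow> \<forall>\<^sub>F n in sequentially. x n \<in> pos_interior"
  using seq_open_seq_interior[of conv "pos_cone le"] unfolding seq_open_def by blast

lemma pos_interior_eventually_add_inverse_Suc:
  "x \<in> pos_interior \<Longrightarrow> \<forall>\<^sub>F n in sequentially. x + (1 / Suc n) *\<^sub>R v \<in> pos_interior"
  using pos_interior_eventually[OF conv_add_inverse_Suc] .

lemma sless_iff: "sless conv le x y \<longleftrightarrow> y - x \<in> pos_interior"
  unfolding sless_def ..

end

locale order_unit_space = ordered_conv_space +
  fixes b :: 'a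
  assumes unit_pos: "sless conv le 0 b"
begin

abbreviation unit_norm :: "'a \<Rightarrow> real" where
  "unit_norm \<equiv> minkowski (ord_interval le (- b) b)"

lemma unit_in_pos_interior: "b \<in> pos_interior"
  using unit_pos unfolding sless_iff by simp

lemma unit_nonneg: "le 0 b"
  using pos_interior_nonneg unit_in_pos_interior .

lemma scaleR_unit_interval_iff:
  assumes "c > 0"
  shows "z \<in> (\<lambda>a. c *\<^sub>R a) ` ord_interval le (- b) b \<longleftrightarrow> le (- (c *\<^sub>R b)) z \<and> le z (c *\<^sub>R b)"
proof
  assume "z \<in> (\<lambda>a. c *\<^sub>R a) ` ord_interval le (- b) b"
  then show "le (- (c *\<^sub>R b)) z \<and> le z (c *\<^sub>R b)"
    using le_scaleR[of c "- b"] le_scaleR[of c _ b] assms unfolding ord_interval_def by auto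
next
  assume z: "le (- (c *\<^sub>R b)) z \<and> le z (c *\<^sub>R b)"
  have "le (- b) (inverse c *\<^sub>R z)" "le (inverse c *\<^sub>R z) b"
    using le_scaleR[of "inverse c" "- (c *\<^sub>R b)" z] le_scaleR[of "inverse c" z "c *\<^sub>R b"] z assms
    by simp_all
  moreover have "z = c *\<^sub>R (inverse c *\<^sub>R z)" using assms by simp
  ultimately show "z \<in> (\<lambda>a. c *\<^sub>R a) ` ord_interval le (- b) b"
    unfolding ord_interval_def by blast
qed

lemma unit_interval_of_pos_interior:
  assumes "c > 0" "c *\<^sub>R b + z \<in> pos_interior" "c *\<^sub>R b - z \<in> pos_interior"
  shows "z \<in> (\<lambda>a. c *\<^sub>R a) ` ord_interval le (- b) b"
proof -
  have "le 0 (z - - (c *\<^sub>R b))" "le 0 (c *\<^sub>R b - z)"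
    using pos_interior_nonneg[OF assms(2)] pos_interior_nonneg[OF assms(3)]
    by (simp_all add: add.commute)
  then show ?thesis
    unfolding scaleR_unit_interval_iff[OF assms(1)] le_iff_diff_nonneg[of _ z] le_iff_diff_nonneg[of z] by blast
qed

lemma unit_norm_le:
  "c > 0 \<Longrightarrow> c *\<^sub>R b + z \<in> pos_interior \<Longrightarrow> c *\<^sub>R b - z \<in> pos_interior \<Longrightarrow> unit_norm z \<le> c"
  using minkowski_le unit_interval_of_pos_interior by (meson less_imp_le)

lemma unit_interval_absorbing: "\<exists>c>0. z \<in> (\<lambda>a. c *\<^sub>R a) ` ord_interval le (- b) b"
proof -
  obtain n where n: "b + (1 / Suc n) *\<^sub>R z \<in> pos_interior" "b + (1 / Suc n) *\<^sub>R (- z) \<in> pos_interior"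
    using eventually_happens[OF eventually_conj[OF
          pos_interior_eventually_add_inverse_Suc[OF unit_in_pos_interior, of z]
          pos_interior_eventually_add_inverse_Suc[OF unit_in_pos_interior, of "- z"]]] by auto
  have scaled: "real (Suc n) *\<^sub>R (b + (1 / Suc n) *\<^sub>R z) = real (Suc n) *\<^sub>R b + z"
    "real (Suc n) *\<^sub>R (b + (1 / Suc n) *\<^sub>R (- z)) = real (Suc n) *\<^sub>R b - z"
    by (simp_all add: algebra_simps)
  have "real (Suc n) *\<^sub>R b + z \<in> pos_interior" "real (Suc n) *\<^sub>R b - z \<in> pos_interior"
    using pos_interior_scaleR[OF n(1), of "real (Suc n)"] pos_interior_scaleR[OF n(2), of "real (Suc n)"]
    unfolding scaled by simp_all
  moreover have "real (Suc n) > 0" by simp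
  ultimately show ?thesis
    using unit_interval_of_pos_interior by blast
qed

lemma unit_norm_nonneg: "unit_norm z \<ge> 0"
proof -
  obtain c where "c > 0" "z \<in> (\<lambda>a. c *\<^sub>R a) ` ord_interval le (- b) b"
    using unit_interval_absorbing by blast
  then show ?thesis by (intro minkowski_nonneg[of c]) auto
qed

lemma unit_norm_lessE:
  assumes "unit_norm z < d"
  obtains c where "c \<ge> 0" "c < d" "le 0 (z + c *\<^sub>R b)" "le 0 (c *\<^sub>R b - z)"
proof -
  obtain c0 where "c0 > 0" "z \<in> (\<lambda>a. c0 *\<^sub>R a) ` ord_interval le (- b) b"
    using unit_interval_absorbing by blast
  then obtain c where c: "c \<ge> 0" "c < d" "z \<in> (\<lambda>a. c *\<^sub>R a) ` ord_interval le (- b) b"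
    using minkowski_lessE[OF assms less_imp_le] by blast
  then have "le (- (c *\<^sub>R b)) z \<and> le z (c *\<^sub>R b)"
    using le_scaleR[of c "- b"] le_scaleR[of c _ b] unfolding ord_interval_def by auto
  then have "le 0 (z + c *\<^sub>R b)" "le 0 (c *\<^sub>R b - z)"
    using le_iff_diff_nonneg[of "- (c *\<^sub>R b)" z] le_iff_diff_nonneg[of z] by simp_all
  with c(1,2) show thesis by (rule that)
qed

lemma order_interval_norm_open:
  "norm_open unit_norm {x. sless conv le a x \<and> sless conv le x c}"
  unfolding norm_open_def sless_iff
proof (intro ballI)
  fix x assume "x \<in> {x. x - a \<in> pos_interior \<and> c - x \<in> pos_interior}"
  then obtain n where n: "x - a - (1 / Suc n) *\<^sub>R b \<in> pos_interior"
    "c - x - (1 / Suc n) *\<^sub>R b \<in> pos_interior"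
    using eventually_happens[OF eventually_conj[OF
          pos_interior_eventually_add_inverse_Suc[of "x - a" "- b"]
          pos_interior_eventually_add_inverse_Suc[of "c - x" "- b"]]] by auto
  define d where "d = 1 / real (Suc n)"
  show "\<exists>r>0. \<forall>y. unit_norm (y - x) < r \<longrightarrow> y \<in> {x. x - a \<in> pos_interior \<and> c - x \<in> pos_interior}"
  proof (intro exI[of _ d] conjI allI impI)
    show "d > 0" unfolding d_def by simp
    fix y assume "unit_norm (y - x) < d"
    then obtain c' where c': "c' < d" "le 0 (y - x + c' *\<^sub>R b)" "le 0 (c' *\<^sub>R b - (y - x))"
      by (rule unit_norm_lessE)
    have slack: "le 0 ((d - c') *\<^sub>R b)"
      using nonneg_scaleR[OF _ unit_nonneg] c'(1) by simp
    have "(x - a - d *\<^sub>R b) + ((d - c') *\<^sub>R b + (y - x + c' *\<^sub>R b)) \<in> pos_interior"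
      "(c - x - d *\<^sub>R b) + ((d - c') *\<^sub>R b + (c' *\<^sub>R b - (y - x))) \<in> pos_interior"
      using pos_interior_add_nonneg[OF n(1) nonneg_add[OF slack c'(2)]]
        pos_interior_add_nonneg[OF n(2) nonneg_add[OF slack c'(3)]]
      unfolding d_def by simp_all
    then show "y \<in> {x. x - a \<in> pos_interior \<and> c - x \<in> pos_interior}"
      by (simp add: algebra_simps)
  qed
qed

lemma symmetric_order_interval:
  assumes "e > 0"
  shows "sless conv le (x - e *\<^sub>R b) (x + e *\<^sub>R b)"
    and "x \<in> {y. sless conv le (x - e *\<^sub>R b) y \<and> sless conv le y (x + e *\<^sub>R b)}"
    and "sless conv le (x - e *\<^sub>R b) y \<Longrightarrow> sless conv le y (x + e *\<^sub>R b) \<Longrightarrow> unit_norm (y - x) \<le> e"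
proof -
  have "(x + e *\<^sub>R b) - (x - e *\<^sub>R b) = (2 * e) *\<^sub>R b"
    by (simp add: algebra_simps scaleR_2 flip: scaleR_scaleR)
  then show "sless conv le (x - e *\<^sub>R b) (x + e *\<^sub>R b)"
    unfolding sless_iff using pos_interior_scaleR[OF unit_in_pos_interior, of "2 * e"] assms by simp
  show "x \<in> {y. sless conv le (x - e *\<^sub>R b) y \<and> sless conv le y (x + e *\<^sub>R b)}"
    unfolding sless_iff using pos_interior_scaleR[OF unit_in_pos_interior assms] by simp
  assume "sless conv le (x - e *\<^sub>R b) y" "sless conv le y (x + e *\<^sub>R b)"
  then show "unit_norm (y - x) \<le> e"
    unfolding sless_iff using assms by (intro unit_norm_le) (simp_all add: algebra_simps)
qed

lemma norm_open_union_of_order_intervals: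
  assumes "norm_open unit_norm U"
  shows "U = \<Union>{s \<in> {{x. sless conv le a x \<and> sless conv le x c} | a c. sless conv le a c}. s \<subseteq> U}"
    (is "U = \<Union>{s \<in> ?B. s \<subseteq> U}")
proof
  show "U \<subseteq> \<Union>{s \<in> ?B. s \<subseteq> U}"
  proof
    fix x assume "x \<in> U"
    then obtain r where r: "r > 0" "\<forall>y. unit_norm (y - x) < r \<longrightarrow> y \<in> U"
      using assms unfolding norm_open_def by blast
    let ?s = "{y. sless conv le (x - (r / 2) *\<^sub>R b) y \<and> sless conv le y (x + (r / 2) *\<^sub>R b)}"
    have "?s \<in> ?B" "x \<in> ?s"
      using symmetric_order_interval(1,2)[of "r / 2"] r(1) by auto
    moreover have "?s \<subseteq> U"
      using symmetric_order_interval(3)[of "r / 2"] r by fastforce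
    ultimately show "x \<in> \<Union>{s \<in> ?B. s \<subseteq> U}" by blast
  qed
qed auto

lemma openin_order_topology_iff_norm_open:
  "openin (order_topology conv le) U \<longleftrightarrow> norm_open unit_norm U"
proof -
  define B where "B = {{x. sless conv le a x \<and> sless conv le x c} | a c. sless conv le a c}"
  have "generate_topology_on B U \<longleftrightarrow> norm_open unit_norm U"
  proof
    assume "generate_topology_on B U"
    then show "norm_open unit_norm U"
      by (rule norm_open_generate_topology_on) (auto simp: B_def intro: order_interval_norm_open)
  next
    assume "norm_open unit_norm U"
    then have "U = \<Union>{s \<in> B. s \<subseteq> U}"
      unfolding B_def by (rule norm_open_union_of_order_intervals)
    also have "generate_topology_on B \<dots>"
      by (rule generate_topology_on.UN) (auto intro: generate_topology_on.Basis)
    finally show "generate_topology_on B U" .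
  qed
  then show ?thesis
    unfolding order_topology_def openin_topology_generated_by_iff B_def .
qed

lemma conv_imp_unit_norm_tendsto_zero:
  assumes "conv x x0"
  shows "(\<lambda>n. unit_norm (x n - x0)) \<longlonglongrightarrow> 0"
proof (rule order_tendstoI)
  fix a :: real assume "a < 0"
  then show "\<forall>\<^sub>F n in sequentially. a < unit_norm (x n - x0)"
    using unit_norm_nonneg by (auto intro: always_eventually less_le_trans)
next
  fix a :: real assume "0 < a"
  let ?e = "a / 2"
  have eb: "?e *\<^sub>R b \<in> pos_interior"
    using pos_interior_scaleR[OF unit_in_pos_interior] \<open>0 < a\<close> by simp
  have "conv (\<lambda>n. (?e *\<^sub>R b - x0) + 1 *\<^sub>R x n) ((?e *\<^sub>R b - x0) + 1 *\<^sub>R x0)"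
    "conv (\<lambda>n. (?e *\<^sub>R b + x0) + (- 1) *\<^sub>R x n) ((?e *\<^sub>R b + x0) + (- 1) *\<^sub>R x0)"
    using conv_affine[OF assms] by blast+
  then have "\<forall>\<^sub>F n in sequentially. ?e *\<^sub>R b + (x n - x0) \<in> pos_interior"
    "\<forall>\<^sub>F n in sequentially. ?e *\<^sub>R b - (x n - x0) \<in> pos_interior"
    using pos_interior_eventually eb by (simp_all add: algebra_simps)
  then show "\<forall>\<^sub>F n in sequentially. unit_norm (x n - x0) < a"
    by eventually_elim (use \<open>0 < a\<close> unit_norm_le[of ?e] in fastforce)
qed

end

theorem theorem7p7:
  fixes conv :: "(nat \<Rightarrow> 'a::real_vector) \<Rightarrow> 'a \<Rightarrow> bool"
    and le :: "'a \<Rightarrow> 'a \<Rightarrow> bool" and b :: 'a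
  assumes "solid_vector_space conv le"
    and "sless conv le 0 b"
  shows "(\<forall>U. openin (order_topology conv le) U \<longleftrightarrow>
             norm_open (minkowski (ord_interval le (- b) b)) U)
       \<and> (\<forall>x x0. conv x x0 \<longrightarrow>
             (\<lambda>n. minkowski (ord_interval le (- b) b) (x n - x0)) \<longlonglongrightarrow> 0)"
proof -
  interpret order_unit_space conv le b
    using assms unfolding solid_vector_space_def by unfold_locales auto
  show ?thesis
    using openin_order_topology_iff_norm_open conv_imp_unit_norm_tendsto_zero by blast
qed

end
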